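(* For every $\mu$ in the upper half-plane, \[J_{\frac{2\mu+1}{2}}\!\left(e^{\pi i\mu}\right)=J_{2\mu}\!\left(e^{\pi i\mu}\right)-J_{2\mu}\!\left(-e^{\pi i\mu}\right).\]
   Context: Let $J(z)=\log|z|\log|1-z|$ and $B_3(x)=x^3-\frac32x^2+\frac12x$. For $\sigma$ in the upper half-plane, with $Q=e^{2\pi i\sigma}$, and $z\in\mathbb{C}^*$ not in $Q^{\mathbb{Z}}$, define \[J_\sigma(z)=\sum_{n=0}^\infty J(zQ^n)-\sum_{n=1}^\infty J(z^{-1}Q^n)+\frac13\log^2|Q|\,B_3\!\left(\frac{\log|z|}{\log|Q|}\right).\] *)

theory Defs
  imports "HOL-Analysis.Analysis"
begin

definition J :: "complex \<Rightarrow> real" where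
  "J z = ln (cmod z) * ln (cmod (1 - z))"

definition B3 :: "real \<Rightarrow> real" where
  "B3 x = x ^ 3 - 3 / 2 * x ^ 2 + 1 / 2 * x"

definition Qof :: "complex \<Rightarrow> complex" where
  "Qof \<sigma> = exp (2 * pi * \<i> * \<sigma>)"

definition Jsig :: "complex \<Rightarrow> complex \<Rightarrow> real" where
  "Jsig \<sigma> z =
     (let Q = Qof \<sigma> in
       (\<Sum>n. J (z * Q ^ n)) - (\<Sum>n. J (inverse z * Q ^ (Suc n)))
       + 1 / 3 * (ln (cmod Q)) ^ 2 * B3 (ln (cmod z) / ln (cmod Q)))"

end

theory Submission
  imports Defs
begin

text \<open>With \<open>q = exp(\<pi> i \<mu>)\<close> the nome on the left is \<open>-q\<^sup>2\<close> and on the right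
  \<open>q\<^sup>4 = (-q\<^sup>2)\<^sup>2\<close>. Splitting both series on the left into even and odd indices
  gives exactly the four series on the right; the odd terms match because
  \<open>q \<cdot> q\<^sup>2 = q\<^sup>-\<^sup>1 \<cdot> q\<^sup>4\<close>. The Bernoulli corrections vanish: on the left since
  \<open>log|q| / log|q\<^sup>2| = 1/2\<close> is a zero of \<open>B\<^sub>3\<close>, on the right since \<open>|q| = |-q|\<close>.
  All series converge absolutely because \<open>J(w) = O(|w|\<^sup>1\<^sup>/\<^sup>2)\<close> as \<open>w \<rightarrow> 0\<close>.\<close>

lemma abs_ln_norm_one_minus_le:
  fixes w :: complex
  assumes "cmod w \<le> 1/2"
  shows "\<bar>ln (cmod (1 - w))\<bar> \<le> 2 * cmod w"
proof -
  have lower: "1 - cmod w \<le> cmod (1 - w)"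
    by (metis norm_one norm_triangle_ineq2)
  have upper: "cmod (1 - w) \<le> 1 + cmod w"
    by (metis norm_one norm_triangle_ineq4)
  have pos: "0 < 1 - cmod w" using assms by simp
  have "ln (cmod (1 - w)) \<le> ln (1 + cmod w)"
    using upper pos lower by (subst ln_le_cancel_iff) auto
  also have "\<dots> \<le> cmod w" by (rule ln_add_one_self_le_self) simp
  finally have "ln (cmod (1 - w)) \<le> cmod w" .
  moreover have "- cmod w - 2 * (cmod w)\<^sup>2 \<le> ln (1 - cmod w)"
    using assms by (intro ln_one_minus_pos_lower_bound) auto
  moreover have "ln (1 - cmod w) \<le> ln (cmod (1 - w))"
    using lower pos by (subst ln_le_cancel_iff) auto
  moreover have "2 * (cmod w)\<^sup>2 \<le> cmod w"
    using assms mult_right_mono[of "2 * cmod w" 1 "cmod w"] by (simp add: power2_eq_square)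
  ultimately show ?thesis by linarith
qed

lemma abs_ln_le_two_div_sqrt:
  fixes x :: real
  assumes "0 < x" "x \<le> 1"
  shows "\<bar>ln x\<bar> \<le> 2 / sqrt x"
proof -
  have "- ln x / 2 = ln (1 / sqrt x)"
    using assms by (simp add: ln_div ln_sqrt)
  also have "\<dots> \<le> 1 / sqrt x - 1"
    using assms by (intro ln_le_minus_one) simp
  finally have "- ln x \<le> 2 / sqrt x - 2"
    by simp
  moreover have "ln x \<le> 0"
    using assms by simp
  ultimately show ?thesis
    by simp
qed

lemma abs_J_le_sqrt:
  assumes "0 < cmod w" "cmod w \<le> 1/2"
  shows "\<bar>J w\<bar> \<le> 4 * sqrt (cmod w)"
proof -
  have "\<bar>J w\<bar> = \<bar>ln (cmod w)\<bar> * \<bar>ln (cmod (1 - w))\<bar>"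
    by (simp add: J_def abs_mult)
  also have "\<dots> \<le> (2 / sqrt (cmod w)) * (2 * cmod w)"
    using assms abs_ln_le_two_div_sqrt[of "cmod w"] abs_ln_norm_one_minus_le[of w]
    by (intro mult_mono) auto
  also have "\<dots> = 4 * sqrt (cmod w)"
    using assms by (simp add: field_simps)
  finally show ?thesis .
qed

lemma summable_J_geometric:
  fixes c p :: complex
  assumes "c \<noteq> 0" "p \<noteq> 0" "cmod p < 1"
  shows "summable (\<lambda>n. J (c * p ^ n))"
proof (rule summable_comparison_test_ev)
  show "summable (\<lambda>n. 4 * sqrt (cmod c) * sqrt (cmod p) ^ n)"
    using assms by (intro summable_mult summable_geometric) auto
  have "(\<lambda>n. cmod (c * p ^ n)) \<longlonglongrightarrow> 0"
    using assms by (simp add: norm_mult norm_power tendsto_mult_right_zero LIMSEQ_power_zero)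
  then have "eventually (\<lambda>n. cmod (c * p ^ n) < 1/2) sequentially"
    by (rule order_tendstoD) simp
  then show "eventually (\<lambda>n. norm (J (c * p ^ n)) \<le> 4 * sqrt (cmod c) * sqrt (cmod p) ^ n) sequentially"
  proof eventually_elim
    case (elim n)
    then have "norm (J (c * p ^ n)) \<le> 4 * sqrt (cmod (c * p ^ n))"
      using assms abs_J_le_sqrt[of "c * p ^ n"] by simp
    also have "\<dots> = 4 * sqrt (cmod c) * sqrt (cmod p) ^ n"
      by (simp add: norm_mult norm_power real_sqrt_mult real_sqrt_power)
    finally show ?case .
  qed
qed

lemma sums_even_odd:
  assumes "f sums s"
  shows "(\<lambda>m. f (2 * m) + f (2 * m + 1)) sums s"
  using sums_group[OF assms, of 2] by (simp add: mult.commute)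

lemma B3_half: "B3 (1 / 2) = 0"
  by (simp add: B3_def power2_eq_square power3_eq_cube)

definition Jseries :: "complex \<Rightarrow> complex \<Rightarrow> real" where
  "Jseries Q z = (\<Sum>n. J (z * Q ^ n)) - (\<Sum>n. J (inverse z * Q ^ Suc n))"

lemma Jsig_eq_Jseries:
  "Jsig \<sigma> z = Jseries (Qof \<sigma>) z
     + 1 / 3 * (ln (cmod (Qof \<sigma>)))\<^sup>2 * B3 (ln (cmod z) / ln (cmod (Qof \<sigma>)))"
  by (simp add: Jsig_def Jseries_def Let_def)

lemma Jseries_neg_square:
  fixes z :: complex
  assumes "z \<noteq> 0" "cmod z < 1"
  shows "Jseries (- (z\<^sup>2)) z = Jseries (z ^ 4) z - Jseries (z ^ 4) (- z)"
proof -
  define P where "P = z ^ 4"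
  have P: "P \<noteq> 0" "cmod P < 1"
    using assms by (auto simp: P_def norm_power power_less_one_iff)
  have neg_square: "- (z\<^sup>2) \<noteq> 0" "cmod (- (z\<^sup>2)) < 1"
    using assms by (auto simp: norm_power power_less_one_iff)
  have even_power: "(- (z\<^sup>2)) ^ (2 * m) = P ^ m" for m
    by (simp add: P_def power_mult power_mult_distrib flip: power_mult)
  define f where "f n = J (z * (- (z\<^sup>2)) ^ n)" for n
  define g where "g n = J ((inverse z * - (z\<^sup>2)) * (- (z\<^sup>2)) ^ n)" for n
  define a where "a m = J (z * P ^ m)" for m
  define b where "b m = J ((inverse z * P) * P ^ m)" for m
  define c where "c m = J (- z * P ^ m)" for m
  define d where "d m = J ((inverse (- z) * P) * P ^ m)" for m
  have summable: "summable f" "summable g" "summable a" "summable b" "summable c" "summable d"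
    unfolding f_def g_def a_def b_def c_def d_def
    by (safe intro!: summable_J_geometric) (use assms P neg_square in auto)
  have "Jseries (- (z\<^sup>2)) z = suminf f - suminf g"
    by (simp add: Jseries_def f_def[abs_def] g_def[abs_def] mult.assoc)
  moreover have "Jseries P z - Jseries P (- z) = (suminf a - suminf b) - (suminf c - suminf d)"
    by (simp add: Jseries_def a_def[abs_def] b_def[abs_def] c_def[abs_def] d_def[abs_def] mult.assoc)
  moreover have grouped_terms: "(f (2 * m) - g (2 * m)) + (f (2 * m + 1) - g (2 * m + 1))
      = (a m - b m) - (c m - d m)" for m
  proof -
    have "f (2 * m) = a m"
      by (simp only: f_def a_def even_power)
    moreover have "z * (- (z\<^sup>2)) ^ (2 * m + 1) = (inverse (- z) * P) * P ^ m"
      unfolding power_add even_power using assms by (simp add: P_def field_simps eval_nat_numeral)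
    then have "f (2 * m + 1) = d m"
      by (simp only: f_def d_def)
    moreover have "(inverse z * - (z\<^sup>2)) * (- (z\<^sup>2)) ^ (2 * m) = - z * P ^ m"
      unfolding even_power using assms by (simp add: field_simps power2_eq_square)
    then have "g (2 * m) = c m"
      by (simp only: g_def c_def)
    moreover have "(inverse z * - (z\<^sup>2)) * (- (z\<^sup>2)) ^ (2 * m + 1) = (inverse z * P) * P ^ m"
      unfolding power_add even_power using assms by (simp add: P_def field_simps eval_nat_numeral)
    then have "g (2 * m + 1) = b m"
      by (simp only: g_def b_def)
    ultimately show ?thesis by simp
  qed
  moreover have "(\<lambda>m. (a m - b m) - (c m - d m)) sums (suminf f - suminf g)"
    using sums_even_odd[OF sums_diff[OF summable_sums summable_sums, OF summable(1,2)]]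
    by (simp only: grouped_terms)
  moreover have "(\<lambda>m. (a m - b m) - (c m - d m)) sums ((suminf a - suminf b) - (suminf c - suminf d))"
    using summable(3-6) by (intro sums_diff summable_sums)
  ultimately show ?thesis
    unfolding P_def by (metis sums_unique2)
qed

theorem mainTheorem16:
  fixes \<mu> :: complex
  assumes "Im \<mu> > 0"
  shows "Jsig ((2 * \<mu> + 1) / 2) (exp (pi * \<i> * \<mu>))
       = Jsig (2 * \<mu>) (exp (pi * \<i> * \<mu>)) - Jsig (2 * \<mu>) (- exp (pi * \<i> * \<mu>))"
proof -
  define q where "q = exp (pi * \<i> * \<mu>)"
  have q: "q \<noteq> 0" "cmod q < 1"
    using assms by (simp_all add: q_def)
  have "2 * pi * \<i> * ((2 * \<mu> + 1) / 2) = 2 * (pi * \<i> * \<mu>) + pi * \<i>"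
    by (simp add: field_simps)
  then have "Qof ((2 * \<mu> + 1) / 2) = exp (2 * (pi * \<i> * \<mu>) + pi * \<i>)"
    unfolding Qof_def by simp
  then have Q_half_shift: "Qof ((2 * \<mu> + 1) / 2) = - (q\<^sup>2)"
    by (simp add: q_def exp_add flip: exp_of_nat_mult)
  have "Qof (2 * \<mu>) = exp (of_nat 4 * (pi * \<i> * \<mu>))"
    unfolding Qof_def by (simp add: algebra_simps)
  also have "\<dots> = q ^ 4"
    unfolding q_def by (rule exp_of_nat_mult)
  finally have Q_double: "Qof (2 * \<mu>) = q ^ 4" .
  have "ln (cmod q) / ln (cmod (- (q\<^sup>2))) = 1 / 2"
    using q by (simp add: norm_power ln_realpow)
  then have "Jsig ((2 * \<mu> + 1) / 2) q = Jseries (- (q\<^sup>2)) q"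
    by (simp add: Jsig_eq_Jseries Q_half_shift B3_half)
  also have "\<dots> = Jseries (q ^ 4) q - Jseries (q ^ 4) (- q)"
    using q by (rule Jseries_neg_square)
  also have "\<dots> = Jsig (2 * \<mu>) q - Jsig (2 * \<mu>) (- q)"
    by (simp add: Jsig_eq_Jseries Q_double)
  finally show ?thesis
    unfolding q_def .
qed

end
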